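(* Let $p\equiv 1\pmod 4$ be a prime. Then $$\prod_{1\le i<j\le \frac{p-1}{2}}(j^2-i^2)\equiv-\Big(\frac{p-1}{2}\Big)!\pmod p.$$ *)

theory Defs
  imports "HOL-Number_Theory.Number_Theory"
begin

end

theory Submission imports Defs begin

text \<open>
  Write \<open>n = (p - 1) / 2\<close> and \<open>P\<close> for the product. Since \<open>j\<^sup>2 - i\<^sup>2 = (j - i)(j + i)\<close>,
  the factors with fixed \<open>j\<close> multiply with \<open>j\<close> to \<open>(2j - 1)!\<close>, so \<open>n! P = \<Prod>\<^sub>j (2j - 1)!\<close>.
  By Wilson's theorem \<open>m! (p - 1 - m)! \<equiv> (-1)\<^bsup>m+1\<^esup>\<close>; pairing \<open>j\<close> with \<open>n + 1 - j\<close>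
  (possible as \<open>n\<close> is even) gives \<open>\<Prod>\<^sub>j (2j - 1)! \<equiv> 1\<close>, while \<open>m = n\<close> gives \<open>n!\<^sup>2 \<equiv> -1\<close>.
  Hence \<open>n! P \<equiv> n! (-n!)\<close>, and \<open>n!\<close> can be cancelled.
\<close>

lemma prod_upper_pairs_eq_nested:
  fixes f :: "nat \<Rightarrow> nat \<Rightarrow> 'a :: comm_monoid_mult"
  shows "(\<Prod>(i, j) \<in> {(i, j). 1 \<le> i \<and> i < j \<and> j \<le> n}. f i j) =
         (\<Prod>j\<in>{1..n}. \<Prod>i\<in>{1..<j}. f i j)"
proof -
  have "(\<Prod>(i, j) \<in> {(i, j). 1 \<le> i \<and> i < j \<and> j \<le> n}. f i j) =
        (\<Prod>(j, i) \<in> (SIGMA j:{1..n}. {1..<j}). f i j)"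
    by (rule prod.reindex_bij_witness[of _ prod.swap prod.swap]) auto
  also have "\<dots> = (\<Prod>j\<in>{1..n}. \<Prod>i\<in>{1..<j}. f i j)"
    by (rule prod.Sigma[symmetric]) auto
  finally show ?thesis .
qed

lemma mult_prod_square_diffs_eq_fact:
  assumes "j \<ge> 1"
  shows "int j * (\<Prod>i\<in>{1..<j}. int j ^ 2 - int i ^ 2) = fact (2 * j - 1)"
proof -
  have diffs: "(\<Prod>i\<in>{1..<j}. j - i) = fact (j - 1)"
  proof -
    have "(\<Prod>i\<in>{1..<j}. j - i) = \<Prod>{1..<j}"
      by (rule prod.reindex_bij_witness[of _ "\<lambda>i. j - i" "\<lambda>i. j - i"]) auto
    then show ?thesis
      using assms by (simp add: fact_prod atLeastLessThanSuc_atLeastAtMost[symmetric])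
  qed
  have sums: "(\<Prod>i\<in>{1..<j}. j + i) = \<Prod>{Suc j..2 * j - 1}"
    by (rule prod.reindex_bij_witness[of _ "\<lambda>i. i - j" "\<lambda>i. j + i"]) auto
  have "(\<Prod>i\<in>{1..<j}. int j ^ 2 - int i ^ 2) = (\<Prod>i\<in>{1..<j}. int (j - i) * int (j + i))"
    by (rule prod.cong) (auto simp: power2_eq_square algebra_simps)
  also have "\<dots> = int ((\<Prod>i\<in>{1..<j}. j - i) * (\<Prod>i\<in>{1..<j}. j + i))"
    by (simp add: prod.distrib)
  also have "\<dots> = int (fact (j - 1) * \<Prod>{Suc j..2 * j - 1})"
    unfolding diffs sums ..
  finally have "int j * (\<Prod>i\<in>{1..<j}. int j ^ 2 - int i ^ 2) =
                int (j * fact (j - 1) * \<Prod>{Suc j..2 * j - 1})"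
    by simp
  also have "j * fact (j - 1) = (fact j :: nat)"
    using assms by (simp add: fact_reduce)
  also have "fact j * \<Prod>{Suc j..2 * j - 1} = (fact (2 * j - 1) :: nat)"
    using fact_eq_fact_times[of j "2 * j - 1"] assms by simp
  finally show ?thesis by simp
qed

lemma fact_mult_prod_square_diffs:
  "fact n * (\<Prod>j\<in>{1..n}. \<Prod>i\<in>{1..<j}. int j ^ 2 - int i ^ 2) = (\<Prod>j\<in>{1..n}. fact (2 * j - 1))"
proof -
  have "fact n * (\<Prod>j\<in>{1..n}. \<Prod>i\<in>{1..<j}. int j ^ 2 - int i ^ 2) =
        (\<Prod>j\<in>{1..n}. int j * (\<Prod>i\<in>{1..<j}. int j ^ 2 - int i ^ 2))"
    by (simp add: fact_prod prod.distrib)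
  also have "\<dots> = (\<Prod>j\<in>{1..n}. fact (2 * j - 1))"
    by (rule prod.cong[OF refl], rule mult_prod_square_diffs_eq_fact) simp
  finally show ?thesis .
qed

lemma prod_upper_segment_cong:
  assumes "m < p"
  shows "[(\<Prod>i\<in>{Suc m..p - 1}. int i) = (-1) ^ (p - 1 - m) * fact (p - 1 - m)] (mod int p)"
proof -
  have "(\<Prod>i\<in>{Suc m..p - 1}. int i) = (\<Prod>k\<in>{1..p - 1 - m}. int p - int k)"
    by (rule prod.reindex_bij_witness[of _ "\<lambda>k. p - k" "\<lambda>i. p - i"]) (use assms in auto)
  also have "[\<dots> = (\<Prod>k\<in>{1..p - 1 - m}. - int k)] (mod int p)"
    by (rule cong_prod) (simp add: cong_iff_dvd_diff)
  also have "(\<Prod>k\<in>{1..p - 1 - m}. - int k) = (-1) ^ (p - 1 - m) * fact (p - 1 - m)"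
    by (simp add: prod_uminus fact_prod)
  finally show ?thesis .
qed

lemma fact_mult_fact_complement_cong:
  assumes "prime p" and "m < p"
  shows "[(-1) ^ (p - 1 - m) * fact m * fact (p - 1 - m) = (-1 :: int)] (mod int p)"
proof -
  have "(fact (p - 1) :: nat) = fact m * \<Prod>{Suc m..p - 1}"
    using fact_eq_fact_times[of m "p - 1"] assms(2) by simp
  then have "int (fact (p - 1)) = int (fact m * \<Prod>{Suc m..p - 1})"
    by (rule arg_cong)
  then have "(fact (p - 1) :: int) = fact m * (\<Prod>i\<in>{Suc m..p - 1}. int i)"
    by (simp only: of_nat_fact of_nat_mult of_nat_prod)
  also have "[\<dots> = fact m * ((-1) ^ (p - 1 - m) * fact (p - 1 - m))] (mod int p)"
    by (rule cong_mult[OF cong_refl prod_upper_segment_cong[OF assms(2)]])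
  finally have "[fact (p - 1) = (-1) ^ (p - 1 - m) * fact m * fact (p - 1 - m)] (mod int p)"
    by (simp add: ac_simps)
  with wilson_theorem[OF assms(1)] show ?thesis
    using cong_sym cong_trans by blast
qed

lemma prod_fact_odd_cong_one:
  assumes "prime p" and "p = 2 * n + 1" and "even n"
  shows "[(\<Prod>j\<in>{1..n}. fact (2 * j - 1)) = (1 :: int)] (mod int p)"
proof -
  obtain k where k: "n = 2 * k"
    using assms(3) by blast
  have "(\<Prod>j\<in>{1..n}. fact (2 * j - 1) :: int) =
        (\<Prod>j\<in>{1..k}. fact (2 * j - 1)) * (\<Prod>j\<in>{k + 1..n}. fact (2 * j - 1))"
    using k by (subst prod.union_disjoint[symmetric]) (auto intro: prod.cong)
  also have "(\<Prod>j\<in>{k + 1..n}. fact (2 * j - 1) :: int) = (\<Prod>j\<in>{1..k}. fact (2 * (n + 1 - j) - 1))"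
    by (rule prod.reindex_bij_witness[of _ "\<lambda>j. n + 1 - j" "\<lambda>j. n + 1 - j"]) (use k in auto)
  finally have split: "(\<Prod>j\<in>{1..n}. fact (2 * j - 1) :: int) =
                       (\<Prod>j\<in>{1..k}. fact (2 * j - 1) * fact (2 * (n + 1 - j) - 1))"
    by (simp add: prod.distrib)
  have "[(\<Prod>j\<in>{1..k}. fact (2 * j - 1) * fact (2 * (n + 1 - j) - 1)) = (\<Prod>j\<in>{1..k}. 1 :: int)] (mod int p)"
  proof (rule cong_prod)
    fix j assume j: "j \<in> {1..k}"
    then have complement: "p - 1 - (2 * j - 1) = 2 * (n + 1 - j) - 1" and bound: "2 * j - 1 < p"
      using k assms(2) by auto
    have "[(-1) ^ (2 * (n + 1 - j) - 1) * fact (2 * j - 1) * fact (2 * (n + 1 - j) - 1) = (-1 :: int)] (mod int p)"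
      using fact_mult_fact_complement_cong[OF assms(1) bound] unfolding complement .
    moreover have "odd (2 * (n + 1 - j) - 1)"
      using j k by auto
    ultimately show "[fact (2 * j - 1) * fact (2 * (n + 1 - j) - 1) = (1 :: int)] (mod int p)"
      by (simp add: cong_minus_minus_iff)
  qed
  then show ?thesis
    unfolding split by simp
qed

lemma fact_half_square_cong:
  assumes "prime p" and "p = 2 * n + 1" and "even n"
  shows "[fact n * fact n = (-1 :: int)] (mod int p)"
  using fact_mult_fact_complement_cong[OF assms(1), of n] assms(2,3) by simp

lemma coprime_fact_prime:
  assumes "prime p" and "n < p"
  shows "coprime (fact n) (int p)"
proof -
  have "\<not> p dvd fact n"
    using prime_dvd_fact_iff[OF assms(1)] assms(2) by simp
  then have not_dvd: "\<not> int p dvd fact n"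
    by (metis of_nat_dvd_iff of_nat_fact)
  show ?thesis
    by (subst coprime_commute, rule prime_imp_coprime) (use assms(1) not_dvd in auto)
qed

theorem lemma2p1:
  fixes p :: nat
  assumes "prime p" and "[p = 1] (mod 4)"
  shows "[(\<Prod>(i, j) \<in> {(i, j). 1 \<le> i \<and> i < j \<and> j \<le> (p - 1) div 2}.
            (int j ^ 2 - int i ^ 2)) = - int (fact ((p - 1) div 2))] (mod int p)"
proof -
  define n where "n = (p - 1) div 2"
  define P where "P = (\<Prod>j\<in>{1..n}. \<Prod>i\<in>{1..<j}. int j ^ 2 - int i ^ 2)"
  have p: "p = 2 * n + 1" and n: "even n"
    using assms(2) unfolding n_def cong_def by presburger+
  have "[fact n * P = 1] (mod int p)"
    using prod_fact_odd_cong_one[OF assms(1) p n] unfolding P_def fact_mult_prod_square_diffs .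
  moreover have "[fact n * (- fact n) = (1 :: int)] (mod int p)"
    using fact_half_square_cong[OF assms(1) p n]
    by (metis cong_minus_minus_iff minus_minus mult_minus_right)
  ultimately have "[fact n * P = fact n * (- fact n)] (mod int p)"
    by (metis cong_sym cong_trans)
  moreover have "coprime (fact n) (int p)"
    using coprime_fact_prime[OF assms(1)] p by simp
  ultimately have "[P = - fact n] (mod int p)"
    using cong_mult_lcancel by blast
  then show ?thesis
    unfolding prod_upper_pairs_eq_nested P_def n_def by simp
qed

end
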